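(* Let $(H,\mu_H,\Delta_H,\alpha_H)$ be a Hom-bialgebra and $(C,\mu_C,\alpha_C)$ a right $H$-module Hom-algebra with action $c\otimes h\mapsto c\cdot h$, with $\alpha_H,\alpha_C$ bijective. Then the Hom-smash product $H\# C$ is a left $H$-comodule Hom-algebra via $\lambda_{H\# C}:H\# C\to H\otimes(H\# C)$, $\lambda_{H\# C}(h\# c)=h_1\otimes(h_2\#\alpha_C(c))$.
   Context: Over a field $k$, no (co)units; $\Delta(h)=h_1\otimes h_2$. Hom-associative algebra $(A,\mu,\alpha)$: $\alpha(aa')=\alpha(a)\alpha(a')$, $\alpha(a)(a'a'')=(aa')\alpha(a'')$; morphisms commute with structure maps and multiplications; tensor products are componentwise. Hom-bialgebra $(H,\mu,\Delta,\alpha)$: $(H,\mu,\alpha)$ Hom-associative, $\Delta(h_1)\otimes\alpha(h_2)=\alpha(h_1)\otimes\Delta(h_2)$, $\Delta(hh')=h_1h'_1\otimes h_2h'_2$, $\Delta(\alpha(h))=\alpha(h_1)\otimes\alpha(h_2)$. Right $H$-module Hom-algebra: Hom-associative $(C,\mu_C,\alpha_C)$ with action satisfying $\alpha_C(c\cdot h)=\alpha_C(c)\cdot\alpha_H(h)$, $(c\cdot h)\cdot\alpha_H(h')=\alpha_C(c)\cdot(hh')$, $(cc')\cdot\alpha_H^2(h)=(c\cdot h_1)(c'\cdot h_2)$. Hom-smash product $H\# C$: $H\otimes C$, structure map $\alpha_H\otimes\alpha_C$, product $(h\# c)(h'\# c')=h\alpha_H^{-1}(h'_1)\#(\alpha_C^{-1}(c)\cdot\alpha_H^{-2}(h'_2))c'$.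 A left $H$-comodule structure on $(M,\alpha_M)$ is $\lambda:M\to H\otimes M$ with $(\alpha_H\otimes\alpha_M)\circ\lambda=\lambda\circ\alpha_M$ and $(\Delta_H\otimes\alpha_M)\circ\lambda=(\alpha_H\otimes\lambda)\circ\lambda$; a left $H$-comodule Hom-algebra is a Hom-associative algebra $D$ with a left $H$-comodule structure $D\to H\otimes D$ that is a morphism of Hom-associative algebras. *)

theory Defs
  imports "HOL-Library.Poly_Mapping"
begin

text \<open>
Model: a k-vector space with basis indexed by a type 'a is the free space
'a =>0 'k (every vector space is of this form up to isomorphism).
The tensor product of 'a =>0 'k and 'b =>0 'k is ('a * 'b) =>0 'k,
with x \<otimes> y given by (a,b) \<mapsto> x(a) * y(b).
\<close>

type_synonym ('a, 'k) vec = "'a \<Rightarrow>\<^sub>0 'k"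

definition scal :: "'k::field \<Rightarrow> ('a, 'k) vec \<Rightarrow> ('a, 'k) vec" where
  "scal c x = Poly_Mapping.map (\<lambda>v. c * v) x"

definition basisv :: "'a \<Rightarrow> ('a, 'k::field) vec" where
  "basisv a = Poly_Mapping.single a 1"

definition klinear :: "(('a, 'k::field) vec \<Rightarrow> ('b, 'k) vec) \<Rightarrow> bool" where
  "klinear f \<longleftrightarrow> (\<forall>x y. f (x + y) = f x + f y) \<and> (\<forall>c x. f (scal c x) = scal c (f x))"

definition lin_ext :: "('a \<Rightarrow> ('b, 'k::field) vec) \<Rightarrow> ('a, 'k) vec \<Rightarrow> ('b, 'k) vec" where
  "lin_ext F t = (\<Sum>p\<in>Poly_Mapping.keys t. scal (Poly_Mapping.lookup t p) (F p))"

definition tensor :: "('a, 'k::field) vec \<Rightarrow> ('b, 'k) vec \<Rightarrow> ('a \<times> 'b, 'k) vec" where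
  "tensor x y = (\<Sum>a\<in>Poly_Mapping.keys x. \<Sum>b\<in>Poly_Mapping.keys y. Poly_Mapping.single (a, b) (Poly_Mapping.lookup x a * Poly_Mapping.lookup y b))"

definition tmap :: "(('a, 'k::field) vec \<Rightarrow> ('c, 'k) vec) \<Rightarrow> (('b, 'k) vec \<Rightarrow> ('d, 'k) vec)
                    \<Rightarrow> ('a \<times> 'b, 'k) vec \<Rightarrow> ('c \<times> 'd, 'k) vec" where
  "tmap f g = lin_ext (\<lambda>(a, b). tensor (f (basisv a)) (g (basisv b)))"

definition relabel :: "('a \<Rightarrow> 'b) \<Rightarrow> ('a, 'k::field) vec \<Rightarrow> ('b, 'k) vec" where
  "relabel \<sigma> = lin_ext (\<lambda>p. basisv (\<sigma> p))"

definition tassoc :: "(('a \<times> 'b) \<times> 'c, 'k::field) vec \<Rightarrow> ('a \<times> ('b \<times> 'c), 'k) vec" where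
  "tassoc = relabel (\<lambda>((a, b), c). (a, (b, c)))"

definition midswap :: "(('a \<times> 'b) \<times> ('c \<times> 'd), 'k::field) vec \<Rightarrow> (('a \<times> 'c) \<times> ('b \<times> 'd), 'k) vec" where
  "midswap = relabel (\<lambda>((a, b), (c, d)). ((a, c), (b, d)))"

definition hom_assoc ::
  "(('a \<times> 'a, 'k::field) vec \<Rightarrow> ('a, 'k) vec) \<Rightarrow> (('a, 'k) vec \<Rightarrow> ('a, 'k) vec) \<Rightarrow> bool" where
  "hom_assoc \<mu> \<alpha> \<longleftrightarrow> klinear \<mu> \<and> klinear \<alpha> \<and>
     (\<forall>a b. \<alpha> (\<mu> (tensor a b)) = \<mu> (tensor (\<alpha> a) (\<alpha> b))) \<and>
     (\<forall>a b c. \<mu> (tensor (\<alpha> a) (\<mu> (tensor b c))) = \<mu> (tensor (\<mu> (tensor a b)) (\<alpha> c)))"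

text \<open>Hom-bialgebra (H, \<mu>, \<Delta>, \<alpha>), without (co)units.\<close>
definition hom_bialgebra ::
  "(('h \<times> 'h, 'k::field) vec \<Rightarrow> ('h, 'k) vec) \<Rightarrow> (('h, 'k) vec \<Rightarrow> ('h \<times> 'h, 'k) vec)
     \<Rightarrow> (('h, 'k) vec \<Rightarrow> ('h, 'k) vec) \<Rightarrow> bool" where
  "hom_bialgebra \<mu> \<Delta> \<alpha> \<longleftrightarrow> hom_assoc \<mu> \<alpha> \<and> klinear \<Delta> \<and>
     (\<forall>h. tassoc (tmap \<Delta> \<alpha> (\<Delta> h)) = tmap \<alpha> \<Delta> (\<Delta> h)) \<and>
     (\<forall>h h'. \<Delta> (\<mu> (tensor h h')) = tmap \<mu> \<mu> (midswap (tensor (\<Delta> h) (\<Delta> h')))) \<and>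
     (\<forall>h. \<Delta> (\<alpha> h) = tmap \<alpha> \<alpha> (\<Delta> h))"

definition right_module_hom_algebra ::
  "(('h \<times> 'h, 'k::field) vec \<Rightarrow> ('h, 'k) vec) \<Rightarrow> (('h, 'k) vec \<Rightarrow> ('h \<times> 'h, 'k) vec)
     \<Rightarrow> (('h, 'k) vec \<Rightarrow> ('h, 'k) vec)
     \<Rightarrow> (('c \<times> 'c, 'k) vec \<Rightarrow> ('c, 'k) vec) \<Rightarrow> (('c, 'k) vec \<Rightarrow> ('c, 'k) vec)
     \<Rightarrow> (('c \<times> 'h, 'k) vec \<Rightarrow> ('c, 'k) vec) \<Rightarrow> bool" where
  "right_module_hom_algebra \<mu>H \<Delta>H \<alpha>H \<mu>C \<alpha>C act \<longleftrightarrow>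
     hom_assoc \<mu>C \<alpha>C \<and> klinear act \<and>
     (\<forall>c h. \<alpha>C (act (tensor c h)) = act (tensor (\<alpha>C c) (\<alpha>H h))) \<and>
     (\<forall>c h h'. act (tensor (act (tensor c h)) (\<alpha>H h')) = act (tensor (\<alpha>C c) (\<mu>H (tensor h h')))) \<and>
     (\<forall>c c' h. act (tensor (\<mu>C (tensor c c')) (\<alpha>H (\<alpha>H h)))
               = \<mu>C (tmap act act (midswap (tensor (tensor c c') (\<Delta>H h)))))"

text \<open>Product of the Hom-smash product H # C on basis elements:
 (h # c)(h' # c') = h \<alpha>_H^{-1}(h'_1) # (\<alpha>_C^{-1}(c) \<cdot> \<alpha>_H^{-2}(h'_2)) c'.\<close>
definition smash_mu_elem ::
  "(('h \<times> 'h, 'k::field) vec \<Rightarrow> ('h, 'k) vec) \<Rightarrow> (('h, 'k) vec \<Rightarrow> ('h \<times> 'h, 'k) vec)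
     \<Rightarrow> (('h, 'k) vec \<Rightarrow> ('h, 'k) vec)
     \<Rightarrow> (('c \<times> 'c, 'k) vec \<Rightarrow> ('c, 'k) vec) \<Rightarrow> (('c, 'k) vec \<Rightarrow> ('c, 'k) vec)
     \<Rightarrow> (('c \<times> 'h, 'k) vec \<Rightarrow> ('c, 'k) vec)
     \<Rightarrow> ('h, 'k) vec \<Rightarrow> ('c, 'k) vec \<Rightarrow> ('h, 'k) vec \<Rightarrow> ('c, 'k) vec \<Rightarrow> ('h \<times> 'c, 'k) vec" where
  "smash_mu_elem \<mu>H \<Delta>H \<alpha>H \<mu>C \<alpha>C act h c h' c' =
     tmap (\<lambda>x. \<mu>H (tensor h (inv \<alpha>H x)))
          (\<lambda>y. \<mu>C (tensor (act (tensor (inv \<alpha>C c) (inv \<alpha>H (inv \<alpha>H y)))) c'))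
          (\<Delta>H h')"

definition smash_mu ::
  "(('h \<times> 'h, 'k::field) vec \<Rightarrow> ('h, 'k) vec) \<Rightarrow> (('h, 'k) vec \<Rightarrow> ('h \<times> 'h, 'k) vec)
     \<Rightarrow> (('h, 'k) vec \<Rightarrow> ('h, 'k) vec)
     \<Rightarrow> (('c \<times> 'c, 'k) vec \<Rightarrow> ('c, 'k) vec) \<Rightarrow> (('c, 'k) vec \<Rightarrow> ('c, 'k) vec)
     \<Rightarrow> (('c \<times> 'h, 'k) vec \<Rightarrow> ('c, 'k) vec)
     \<Rightarrow> (('h \<times> 'c) \<times> ('h \<times> 'c), 'k) vec \<Rightarrow> ('h \<times> 'c, 'k) vec" where
  "smash_mu \<mu>H \<Delta>H \<alpha>H \<mu>C \<alpha>C act =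
     lin_ext (\<lambda>((i, j), (i', j')).
        smash_mu_elem \<mu>H \<Delta>H \<alpha>H \<mu>C \<alpha>C act (basisv i) (basisv j) (basisv i') (basisv j'))"

definition smash_alpha ::
  "(('h, 'k::field) vec \<Rightarrow> ('h, 'k) vec) \<Rightarrow> (('c, 'k) vec \<Rightarrow> ('c, 'k) vec)
     \<Rightarrow> ('h \<times> 'c, 'k) vec \<Rightarrow> ('h \<times> 'c, 'k) vec" where
  "smash_alpha \<alpha>H \<alpha>C = tmap \<alpha>H \<alpha>C"

definition left_comodule ::
  "(('h, 'k::field) vec \<Rightarrow> ('h \<times> 'h, 'k) vec) \<Rightarrow> (('h, 'k) vec \<Rightarrow> ('h, 'k) vec)
     \<Rightarrow> (('m, 'k) vec \<Rightarrow> ('m, 'k) vec) \<Rightarrow> (('m, 'k) vec \<Rightarrow> ('h \<times> 'm, 'k) vec) \<Rightarrow> bool" where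
  "left_comodule \<Delta>H \<alpha>H \<alpha>M coact \<longleftrightarrow> klinear coact \<and>
     (\<forall>m. tmap \<alpha>H \<alpha>M (coact m) = coact (\<alpha>M m)) \<and>
     (\<forall>m. tassoc (tmap \<Delta>H \<alpha>M (coact m)) = tmap \<alpha>H coact (coact m))"

definition hom_assoc_morphism ::
  "(('a \<times> 'a, 'k::field) vec \<Rightarrow> ('a, 'k) vec) \<Rightarrow> (('a, 'k) vec \<Rightarrow> ('a, 'k) vec)
     \<Rightarrow> (('b \<times> 'b, 'k) vec \<Rightarrow> ('b, 'k) vec) \<Rightarrow> (('b, 'k) vec \<Rightarrow> ('b, 'k) vec)
     \<Rightarrow> (('a, 'k) vec \<Rightarrow> ('b, 'k) vec) \<Rightarrow> bool" where
  "hom_assoc_morphism \<mu>A \<alpha>A \<mu>B \<alpha>B f \<longleftrightarrow> klinear f \<and>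
     (\<forall>a. f (\<alpha>A a) = \<alpha>B (f a)) \<and>
     (\<forall>a a'. f (\<mu>A (tensor a a')) = \<mu>B (tensor (f a) (f a')))"

definition tensor_mu ::
  "(('a \<times> 'a, 'k::field) vec \<Rightarrow> ('a, 'k) vec) \<Rightarrow> (('b \<times> 'b, 'k) vec \<Rightarrow> ('b, 'k) vec)
     \<Rightarrow> (('a \<times> 'b) \<times> ('a \<times> 'b), 'k) vec \<Rightarrow> ('a \<times> 'b, 'k) vec" where
  "tensor_mu \<mu>A \<mu>B t = tmap \<mu>A \<mu>B (midswap t)"

definition left_comodule_hom_algebra ::
  "(('h \<times> 'h, 'k::field) vec \<Rightarrow> ('h, 'k) vec) \<Rightarrow> (('h, 'k) vec \<Rightarrow> ('h \<times> 'h, 'k) vec)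
     \<Rightarrow> (('h, 'k) vec \<Rightarrow> ('h, 'k) vec)
     \<Rightarrow> (('d \<times> 'd, 'k) vec \<Rightarrow> ('d, 'k) vec) \<Rightarrow> (('d, 'k) vec \<Rightarrow> ('d, 'k) vec)
     \<Rightarrow> (('d, 'k) vec \<Rightarrow> ('h \<times> 'd, 'k) vec) \<Rightarrow> bool" where
  "left_comodule_hom_algebra \<mu>H \<Delta>H \<alpha>H \<mu>D \<alpha>D coact \<longleftrightarrow>
     hom_assoc \<mu>D \<alpha>D \<and> left_comodule \<Delta>H \<alpha>H \<alpha>D coact \<and>
     hom_assoc_morphism \<mu>D \<alpha>D (tensor_mu \<mu>H \<mu>D) (tmap \<alpha>H \<alpha>D) coact"

definition smash_coaction ::
  "(('h, 'k::field) vec \<Rightarrow> ('h \<times> 'h, 'k) vec) \<Rightarrow> (('c, 'k) vec \<Rightarrow> ('c, 'k) vec)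
     \<Rightarrow> ('h \<times> 'c, 'k) vec \<Rightarrow> ('h \<times> ('h \<times> 'c), 'k) vec" where
  "smash_coaction \<Delta>H \<alpha>C t = tassoc (tmap \<Delta>H \<alpha>C t)"

end

theory Submission
  imports Defs
begin

text \<open>
All structure maps are linear, so every axiom of a left comodule Hom-algebra can be checked on
elementary tensors h \<otimes> c. Writing all maps in Sweedler notation, pushing the inverses of the
structure maps inwards through the (co)multiplicativity identities and re-associating all
products to the right, the two sides of each axiom become the same expression, up to a single
application of the Hom-coassociativity \<Delta>(h_1) \<otimes> \<alpha>(h_2) = \<alpha>(h_1) \<otimes> \<Delta>(h_2).
\<close>

section \<open>Free vector spaces\<close>

lemma lookup_scal [simp]: "Poly_Mapping.lookup (scal c x) a = c * Poly_Mapping.lookup x a"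
  unfolding scal_def by transfer (simp add: when_def)

lemma lookup_basisv: "Poly_Mapping.lookup (basisv a) b = (if a = b then 1 else 0)"
  unfolding basisv_def by (simp add: lookup_single when_def)

lemma keys_basisv [simp]: "Poly_Mapping.keys (basisv a :: ('a, 'k::field) vec) = {a}"
  unfolding basisv_def by simp

lemma scal_add [simp]: "scal c (x + y) = scal c x + scal c y"
  by (rule poly_mapping_eqI) (simp add: lookup_add algebra_simps)

lemma scal_add_left: "scal (c + d) x = scal c x + scal d x"
  by (rule poly_mapping_eqI) (simp add: lookup_add algebra_simps)

lemma scal_scal [simp]: "scal c (scal d x) = scal (c * d) x"
  by (rule poly_mapping_eqI) (simp add: algebra_simps)

lemma scal_zero_left [simp]: "scal 0 x = 0"
  by (rule poly_mapping_eqI) simp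

lemma scal_zero_right [simp]: "scal c 0 = 0"
  by (rule poly_mapping_eqI) simp

lemma scal_one [simp]: "scal 1 x = x"
  by (rule poly_mapping_eqI) simp

lemma scal_sum: "scal c (sum f S) = (\<Sum>i\<in>S. scal c (f i))"
  by (induction S rule: infinite_finite_induct) auto

lemma klinearD:
  assumes "klinear f"
  shows klinear_add: "f (x + y) = f x + f y" and klinear_scal: "f (scal c x) = scal c (f x)"
  using assms unfolding klinear_def by auto

lemma klinear_zero:
  assumes "klinear f"
  shows "f 0 = 0"
proof -
  have "f (0 + 0) = f 0 + f 0" using klinear_add[OF assms] .
  then show ?thesis by simp
qed

lemma klinear_sum: "klinear f \<Longrightarrow> f (sum g S) = (\<Sum>i\<in>S. f (g i))"
  by (induction S rule: infinite_finite_induct) (auto simp: klinear_zero klinearD)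

lemma klinear_id: "klinear (\<lambda>x. x)"
  unfolding klinear_def by simp

lemma klinear_comp: "klinear f \<Longrightarrow> klinear g \<Longrightarrow> klinear (\<lambda>x. f (g x))"
  unfolding klinear_def by simp

lemma klinear_inverse:
  assumes "klinear f" and "\<And>x. f (g x) = x" and "\<And>x. g (f x) = x"
  shows "klinear g"
  unfolding klinear_def
proof safe
  fix x y
  have "x + y = f (g x + g y)" by (simp add: klinearD[OF assms(1)] assms)
  then show "g (x + y) = g x + g y" by (simp add: assms)
next
  fix c x
  have "scal c x = f (scal c (g x))" by (simp add: klinearD[OF assms(1)] assms)
  then show "g (scal c x) = scal c (g x)" by (simp add: assms)
qed

lemma lin_ext_superset:
  assumes "finite S" and "Poly_Mapping.keys t \<subseteq> S"
  shows "lin_ext F t = (\<Sum>p\<in>S. scal (Poly_Mapping.lookup t p) (F p))"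
  unfolding lin_ext_def
  by (rule sum.mono_neutral_left) (use assms in \<open>auto simp: in_keys_iff\<close>)

lemma klinear_lin_ext: "klinear (lin_ext F)"
  unfolding klinear_def
proof safe
  fix x y :: "('a, 'b) vec"
  let ?S = "Poly_Mapping.keys x \<union> Poly_Mapping.keys y"
  have "lin_ext F (x + y) = (\<Sum>p\<in>?S. scal (Poly_Mapping.lookup (x + y) p) (F p))"
    by (rule lin_ext_superset) (auto simp: keys_add)
  also have "\<dots> = (\<Sum>p\<in>?S. scal (Poly_Mapping.lookup x p) (F p))
                 + (\<Sum>p\<in>?S. scal (Poly_Mapping.lookup y p) (F p))"
    by (simp add: lookup_add scal_add_left sum.distrib)
  also have "\<dots> = lin_ext F x + lin_ext F y"
    by (subst (1 2) lin_ext_superset[where S = ?S]) auto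
  finally show "lin_ext F (x + y) = lin_ext F x + lin_ext F y" .
next
  fix c x
  have "lin_ext F (scal c x)
        = (\<Sum>p\<in>Poly_Mapping.keys x. scal (Poly_Mapping.lookup (scal c x) p) (F p))"
    by (rule lin_ext_superset) (auto simp: in_keys_iff)
  then show "lin_ext F (scal c x) = scal c (lin_ext F x)"
    by (simp add: lin_ext_def scal_sum)
qed

lemma lin_ext_basisv [simp]: "lin_ext F (basisv a) = F a"
  by (simp add: lin_ext_def lookup_basisv)

lemma lin_ext_basisv_eq: "lin_ext basisv x = x"
proof (rule poly_mapping_eqI)
  fix k
  have "(\<Sum>p\<in>Poly_Mapping.keys x. Poly_Mapping.lookup x p * (if p = k then 1 else 0))
        = (\<Sum>p\<in>Poly_Mapping.keys x. if p = k then Poly_Mapping.lookup x p else 0)"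
    by (rule sum.cong) auto
  then show "Poly_Mapping.lookup (lin_ext basisv x) k = Poly_Mapping.lookup x k"
    by (simp add: lin_ext_def lookup_sum lookup_basisv in_keys_iff)
qed

lemma klinear_eq_lin_ext: "klinear f \<Longrightarrow> f x = lin_ext (\<lambda>a. f (basisv a)) x"
  by (subst (1) lin_ext_basisv_eq[symmetric]) (simp add: lin_ext_def klinear_sum klinearD)

lemma klinear_eq_on_basis:
  assumes "klinear f" and "klinear g" and "\<And>a. f (basisv a) = g (basisv a)"
  shows "f x = g x"
proof -
  have "f x = lin_ext (\<lambda>a. f (basisv a)) x" by (rule klinear_eq_lin_ext[OF assms(1)])
  also have "\<dots> = g x" unfolding assms(3) by (rule klinear_eq_lin_ext[OF assms(2), symmetric])
  finally show ?thesis .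
qed

section \<open>Tensor products\<close>

lemma lookup_tensor:
  "Poly_Mapping.lookup (tensor x y) p = Poly_Mapping.lookup x (fst p) * Poly_Mapping.lookup y (snd p)"
proof -
  obtain a b where p: "p = (a, b)" by (cases p)
  let ?x = "Poly_Mapping.lookup x" and ?y = "Poly_Mapping.lookup y"
  have "Poly_Mapping.lookup (tensor x y) (a, b)
        = (\<Sum>a'\<in>Poly_Mapping.keys x. if a' = a
             then (\<Sum>b'\<in>Poly_Mapping.keys y. if b' = b then ?x a' * ?y b' else 0) else 0)"
    unfolding tensor_def lookup_sum by (intro sum.cong refl) (auto simp: lookup_single when_def)
  also have "\<dots> = ?x a * ?y b"
    by (simp only: sum.delta finite_keys) (auto simp: in_keys_iff)
  finally show ?thesis by (simp add: p)
qed

lemma tensor_add_left [simp]: "tensor (x + x') y = tensor x y + tensor x' y"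
  by (rule poly_mapping_eqI) (simp add: lookup_tensor lookup_add algebra_simps)

lemma tensor_add_right [simp]: "tensor x (y + y') = tensor x y + tensor x y'"
  by (rule poly_mapping_eqI) (simp add: lookup_tensor lookup_add algebra_simps)

lemma tensor_scal_left [simp]: "tensor (scal c x) y = scal c (tensor x y)"
  by (rule poly_mapping_eqI) (simp add: lookup_tensor algebra_simps)

lemma tensor_scal_right [simp]: "tensor x (scal c y) = scal c (tensor x y)"
  by (rule poly_mapping_eqI) (simp add: lookup_tensor algebra_simps)

lemma tensor_basisv: "tensor (basisv a) (basisv b) = basisv (a, b)"
  by (rule poly_mapping_eqI) (simp add: lookup_tensor lookup_basisv prod_eq_iff)

lemma klinear_tensor_left: "klinear (\<lambda>x. tensor x y)"
  unfolding klinear_def by simp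

lemma klinear_tensor_right: "klinear (\<lambda>y. tensor x y)"
  unfolding klinear_def by simp

lemma klinear_eq_on_tensor_basis:
  fixes f g :: "('a \<times> 'b, 'k::field) vec \<Rightarrow> ('c, 'k) vec"
  assumes "klinear f" and "klinear g"
    and "\<And>a b. f (tensor (basisv a) (basisv b)) = g (tensor (basisv a) (basisv b))"
  shows "f t = g t"
proof (rule klinear_eq_on_basis[OF assms(1,2)])
  fix p :: "'a \<times> 'b"
  show "f (basisv p) = g (basisv p)"
    using assms(3)[of "fst p" "snd p"] by (simp add: tensor_basisv)
qed

lemma bilinear_eq_on_basis:
  assumes "\<And>y. klinear (\<lambda>x. F x y)" and "\<And>y. klinear (\<lambda>x. G x y)"
    and "\<And>x. klinear (\<lambda>y. F x y)" and "\<And>x. klinear (\<lambda>y. G x y)"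
    and "\<And>a b. F (basisv a) (basisv b) = G (basisv a) (basisv b)"
  shows "F x y = G x y"
proof -
  have "F x (basisv b) = G x (basisv b)" for b
    using klinear_eq_on_basis[OF assms(1,2)] assms(5) .
  then show ?thesis
    using klinear_eq_on_basis[OF assms(3,4)] by blast
qed

lemma klinear_eq_on_tensors:
  assumes "\<And>x y. f (tensor x y) = g (tensor x y)" and "klinear f" and "klinear g"
  shows "f t = g t"
  using klinear_eq_on_tensor_basis[OF assms(2,3)] assms(1) by blast

lemma bilinear_eq_on_tensors:
  assumes eq: "\<And>x1 x2 y1 y2. F (tensor x1 x2) (tensor y1 y2) = G (tensor x1 x2) (tensor y1 y2)"
    and "\<And>y. klinear (\<lambda>x. F x y)" and "\<And>y. klinear (\<lambda>x. G x y)"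
    and "\<And>x. klinear (\<lambda>y. F x y)" and "\<And>x. klinear (\<lambda>y. G x y)"
  shows "F x y = G x y"
proof -
  have "F x (tensor y1 y2) = G x (tensor y1 y2)" for y1 y2
    by (rule klinear_eq_on_tensors[where f = "\<lambda>x. F x (tensor y1 y2)"]) (simp_all add: eq assms)
  then show ?thesis
    by (rule klinear_eq_on_tensors[where f = "\<lambda>y. F x y"]) (simp_all add: assms)
qed

lemma trilinear_eq_on_tensors:
  assumes eq: "\<And>x1 x2 y1 y2 z1 z2.
      F (tensor x1 x2) (tensor y1 y2) (tensor z1 z2) = G (tensor x1 x2) (tensor y1 y2) (tensor z1 z2)"
    and "\<And>y z. klinear (\<lambda>x. F x y z)" and "\<And>y z. klinear (\<lambda>x. G x y z)"
    and "\<And>x z. klinear (\<lambda>y. F x y z)" and "\<And>x z. klinear (\<lambda>y. G x y z)"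
    and "\<And>x y. klinear (\<lambda>z. F x y z)" and "\<And>x y. klinear (\<lambda>z. G x y z)"
  shows "F x y z = G x y z"
proof -
  have "F x y (tensor z1 z2) = G x y (tensor z1 z2)" for z1 z2
    by (rule bilinear_eq_on_tensors[where F = "\<lambda>x y. F x y (tensor z1 z2)"]) (simp_all add: eq assms)
  then show ?thesis
    by (rule klinear_eq_on_tensors[where f = "\<lambda>z. F x y z"]) (simp_all add: assms)
qed

text \<open>
  \<open>tensor_lift \<Phi>\<close> is the linear map on A \<otimes> B that sends a \<otimes> b to \<Phi> a b on basis vectors;
  for bilinear \<Phi> it does so on all of A \<otimes> B (\<open>tensor_lift_tensor\<close>). Applied to a coproduct it
  is Sweedler notation: \<open>tensor_lift \<Phi> (\<Delta> h)\<close> stands for \<Phi> h_1 h_2.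
\<close>
definition tensor_lift ::
  "(('a, 'k::field) vec \<Rightarrow> ('b, 'k) vec \<Rightarrow> ('c, 'k) vec) \<Rightarrow> ('a \<times> 'b, 'k) vec \<Rightarrow> ('c, 'k) vec" where
  "tensor_lift \<Phi> = lin_ext (\<lambda>(a, b). \<Phi> (basisv a) (basisv b))"

lemma klinear_tensor_lift: "klinear (tensor_lift \<Phi>)"
  unfolding tensor_lift_def by (rule klinear_lin_ext)

lemma tensor_lift_add [simp]: "tensor_lift \<Phi> (x + y) = tensor_lift \<Phi> x + tensor_lift \<Phi> y"
  by (rule klinear_add[OF klinear_tensor_lift])

lemma tensor_lift_scal [simp]: "tensor_lift \<Phi> (scal c x) = scal c (tensor_lift \<Phi> x)"
  by (rule klinear_scal[OF klinear_tensor_lift])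

lemma tensor_lift_basisv [simp]:
  "tensor_lift \<Phi> (tensor (basisv a) (basisv b)) = \<Phi> (basisv a) (basisv b)"
  unfolding tensor_lift_def tensor_basisv by simp

lemma tensor_lift_basisv_pair: "tensor_lift \<Phi> (basisv p) = \<Phi> (basisv (fst p)) (basisv (snd p))"
  unfolding tensor_lift_def by (simp add: case_prod_beta)

lemma tensor_lift_eq_sum:
  "tensor_lift \<Phi> t = (\<Sum>p\<in>Poly_Mapping.keys t.
     scal (Poly_Mapping.lookup t p) (\<Phi> (basisv (fst p)) (basisv (snd p))))"
  unfolding tensor_lift_def lin_ext_def by (simp add: case_prod_beta)

lemma tensor_lift_fun_add [simp]:
  "tensor_lift (\<lambda>a b. \<Phi> a b + \<Psi> a b) t = tensor_lift \<Phi> t + tensor_lift \<Psi> t"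
  unfolding tensor_lift_eq_sum by (simp add: sum.distrib)

lemma tensor_lift_fun_scal [simp]:
  "tensor_lift (\<lambda>a b. scal c (\<Phi> a b)) t = scal c (tensor_lift \<Phi> t)"
  unfolding tensor_lift_eq_sum by (simp add: scal_sum mult.commute)

lemma tensor_lift_cong: "(\<And>x y. \<Phi> x y = \<Psi> x y) \<Longrightarrow> tensor_lift \<Phi> t = tensor_lift \<Psi> t"
  by (metis ext)

lemma tensor_lift_tensor:
  assumes "\<forall>y. klinear (\<lambda>x. \<Phi> x y)" and "\<forall>x. klinear (\<lambda>y. \<Phi> x y)"
  shows "tensor_lift \<Phi> (tensor x y) = \<Phi> x y"
  by (rule bilinear_eq_on_basis[where F = "\<lambda>x y. tensor_lift \<Phi> (tensor x y)"])
     (use assms in \<open>auto intro: klinear_comp[OF klinear_tensor_lift]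
                                 klinear_tensor_left klinear_tensor_right\<close>)

lemma klinear_tensor_lift_comp:
  "klinear f \<Longrightarrow> f (tensor_lift \<Phi> t) = tensor_lift (\<lambda>a b. f (\<Phi> a b)) t"
  by (rule klinear_eq_on_tensor_basis[OF klinear_comp[OF _ klinear_tensor_lift] klinear_tensor_lift])
     simp_all

lemma tensor_lift_tensor_lift:
  "tensor_lift \<Psi> (tensor_lift \<Phi> t) = tensor_lift (\<lambda>a b. tensor_lift \<Psi> (\<Phi> a b)) t"
  by (rule klinear_tensor_lift_comp[OF klinear_tensor_lift])

lemma tensor_lift_swap:
  "tensor_lift (\<lambda>x y. tensor_lift (\<lambda>a b. \<Phi> x y a b) s) t
   = tensor_lift (\<lambda>a b. tensor_lift (\<lambda>x y. \<Phi> x y a b) t) s"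
  unfolding tensor_lift_eq_sum
  by (simp add: scal_sum sum.swap[of _ "Poly_Mapping.keys t"] mult.commute)

lemma tensor_lift_tensor_eq: "tensor_lift tensor t = t"
  by (rule klinear_eq_on_tensor_basis[OF klinear_tensor_lift klinear_id]) simp

lemma klinear_tensor_lift_fun:
  assumes "\<And>b c. klinear (\<lambda>a. \<Phi> a b c)"
  shows "klinear (\<lambda>a. tensor_lift (\<Phi> a) t)"
  unfolding klinear_def tensor_lift_eq_sum
  by (simp add: klinearD[OF assms] sum.distrib scal_sum mult.commute)

lemma tmap_eq_tensor_lift: "tmap f g t = tensor_lift (\<lambda>x y. tensor (f x) (g y)) t"
  unfolding tmap_def tensor_lift_def by simp

lemma tensor_tensor_lift_left:
  "tensor (tensor_lift \<Phi> t) y = tensor_lift (\<lambda>a b. tensor (\<Phi> a b) y) t"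
  by (rule klinear_tensor_lift_comp[OF klinear_tensor_left])

lemma tensor_tensor_lift_right:
  "tensor y (tensor_lift \<Phi> t) = tensor_lift (\<lambda>a b. tensor y (\<Phi> a b)) t"
  by (rule klinear_tensor_lift_comp[OF klinear_tensor_right])

lemma klinear_simps:
  assumes "klinear f"
  shows "f (x + y) = f x + f y" and "f (scal c x) = scal c (f x)" and "f 0 = 0"
    and "f (tensor_lift \<Phi> t) = tensor_lift (\<lambda>a b. f (\<Phi> a b)) t"
  using klinearD[OF assms] klinear_zero[OF assms] klinear_tensor_lift_comp[OF assms] by auto

lemma klinear_relabel: "klinear (relabel \<sigma>)"
  unfolding relabel_def by (rule klinear_lin_ext)

lemma klinear_tassoc: "klinear tassoc"
  unfolding tassoc_def by (rule klinear_relabel)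

lemma klinear_midswap: "klinear midswap"
  unfolding midswap_def by (rule klinear_relabel)

lemmas tassoc_simps [simp] = klinear_simps[OF klinear_tassoc]
lemmas midswap_simps [simp] = klinear_simps[OF klinear_midswap]

lemma tassoc_tensor: "tassoc (tensor s c) = tensor_lift (\<lambda>a b. tensor a (tensor b c)) s"
proof (rule bilinear_eq_on_basis[where F = "\<lambda>s c. tassoc (tensor s c)"])
  fix p d
  show "tassoc (tensor (basisv p) (basisv d))
        = tensor_lift (\<lambda>a b. tensor a (tensor b (basisv d))) (basisv p)"
    by (simp add: tensor_basisv tassoc_def relabel_def tensor_lift_basisv_pair case_prod_beta)
qed (auto simp: klinear_def)

lemma midswap_tensor:
  "midswap (tensor s t)
   = tensor_lift (\<lambda>a b. tensor_lift (\<lambda>c d. tensor (tensor a c) (tensor b d)) t) s"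
proof (rule bilinear_eq_on_basis[where F = "\<lambda>s t. midswap (tensor s t)"])
  fix p q
  show "midswap (tensor (basisv p) (basisv q))
        = tensor_lift (\<lambda>a b. tensor_lift (\<lambda>c d. tensor (tensor a c) (tensor b d)) (basisv q))
            (basisv p)"
    by (simp add: tensor_basisv midswap_def relabel_def tensor_lift_basisv_pair case_prod_beta)
qed (auto simp: klinear_def)

text \<open>
  Normalises into nested Sweedler sums of elementary tensors; \<open>klinear_def\<close> discharges the
  bilinearity side conditions of \<open>tensor_lift_tensor\<close>.
\<close>
lemmas tensor_lift_normalize =
  tmap_eq_tensor_lift tassoc_tensor midswap_tensor tensor_tensor_lift_left
  tensor_tensor_lift_right tensor_lift_tensor_lift tensor_lift_tensor klinear_def

section \<open>The Hom-smash product\<close>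

locale hom_smash_product =
  fixes \<mu>H :: "('h \<times> 'h, 'k::field) vec \<Rightarrow> ('h, 'k) vec"
    and \<Delta>H :: "('h, 'k) vec \<Rightarrow> ('h \<times> 'h, 'k) vec"
    and \<alpha>H :: "('h, 'k) vec \<Rightarrow> ('h, 'k) vec"
    and \<mu>C :: "('c \<times> 'c, 'k) vec \<Rightarrow> ('c, 'k) vec"
    and \<alpha>C :: "('c, 'k) vec \<Rightarrow> ('c, 'k) vec"
    and act :: "('c \<times> 'h, 'k) vec \<Rightarrow> ('c, 'k) vec"
  assumes hom_bialgebra: "hom_bialgebra \<mu>H \<Delta>H \<alpha>H"
    and right_module: "right_module_hom_algebra \<mu>H \<Delta>H \<alpha>H \<mu>C \<alpha>C act"
    and bij_\<alpha>H: "bij \<alpha>H" and bij_\<alpha>C: "bij \<alpha>C"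
begin

abbreviation "\<iota> \<equiv> inv \<alpha>H"
abbreviation "\<kappa> \<equiv> inv \<alpha>C"

abbreviation "SM \<equiv> smash_mu \<mu>H \<Delta>H \<alpha>H \<mu>C \<alpha>C act"
abbreviation "SA \<equiv> smash_alpha \<alpha>H \<alpha>C"
abbreviation "CO \<equiv> smash_coaction \<Delta>H \<alpha>C"

lemma klinear_\<mu>H: "klinear \<mu>H" and klinear_\<Delta>H: "klinear \<Delta>H" and klinear_\<alpha>H: "klinear \<alpha>H"
  and klinear_\<mu>C: "klinear \<mu>C" and klinear_\<alpha>C: "klinear \<alpha>C" and klinear_act: "klinear act"
  using hom_bialgebra right_module
  unfolding hom_bialgebra_def right_module_hom_algebra_def hom_assoc_def by auto

lemma \<alpha>H_\<iota> [simp]: "\<alpha>H (\<iota> h) = h" and \<iota>_\<alpha>H [simp]: "\<iota> (\<alpha>H h) = h"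
  and \<alpha>C_\<kappa> [simp]: "\<alpha>C (\<kappa> c) = c" and \<kappa>_\<alpha>C [simp]: "\<kappa> (\<alpha>C c) = c"
  using bij_\<alpha>H bij_\<alpha>C by (simp_all add: bij_def surj_f_inv_f inv_f_f)

lemma klinear_\<iota>: "klinear \<iota>"
  by (rule klinear_inverse[OF klinear_\<alpha>H]) simp_all

lemma klinear_\<kappa>: "klinear \<kappa>"
  by (rule klinear_inverse[OF klinear_\<alpha>C]) simp_all

lemmas structure_maps_simps [simp] =
  klinear_simps[OF klinear_\<mu>H] klinear_simps[OF klinear_\<Delta>H] klinear_simps[OF klinear_\<alpha>H]
  klinear_simps[OF klinear_\<mu>C] klinear_simps[OF klinear_\<alpha>C] klinear_simps[OF klinear_act]
  klinear_simps[OF klinear_\<iota>] klinear_simps[OF klinear_\<kappa>]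

lemma \<Delta>H_hom_coassoc: "tassoc (tmap \<Delta>H \<alpha>H (\<Delta>H h)) = tmap \<alpha>H \<Delta>H (\<Delta>H h)"
  and \<Delta>H_mult: "\<Delta>H (\<mu>H (tensor h h')) = tmap \<mu>H \<mu>H (midswap (tensor (\<Delta>H h) (\<Delta>H h')))"
  and \<Delta>H_\<alpha>H: "\<Delta>H (\<alpha>H h) = tmap \<alpha>H \<alpha>H (\<Delta>H h)"
  and \<alpha>H_mult [simp]: "\<alpha>H (\<mu>H (tensor a b)) = \<mu>H (tensor (\<alpha>H a) (\<alpha>H b))"
  and \<mu>H_hom_assoc: "\<mu>H (tensor (\<alpha>H a) (\<mu>H (tensor b c))) = \<mu>H (tensor (\<mu>H (tensor a b)) (\<alpha>H c))"
  using hom_bialgebra unfolding hom_bialgebra_def hom_assoc_def by blast+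

lemma \<alpha>C_mult [simp]: "\<alpha>C (\<mu>C (tensor a b)) = \<mu>C (tensor (\<alpha>C a) (\<alpha>C b))"
  and \<mu>C_hom_assoc: "\<mu>C (tensor (\<alpha>C a) (\<mu>C (tensor b c))) = \<mu>C (tensor (\<mu>C (tensor a b)) (\<alpha>C c))"
  and \<alpha>C_act [simp]: "\<alpha>C (act (tensor c h)) = act (tensor (\<alpha>C c) (\<alpha>H h))"
  and act_act: "act (tensor (act (tensor c h)) (\<alpha>H h')) = act (tensor (\<alpha>C c) (\<mu>H (tensor h h')))"
  and act_mult: "act (tensor (\<mu>C (tensor c c')) (\<alpha>H (\<alpha>H h)))
                 = \<mu>C (tmap act act (midswap (tensor (tensor c c') (\<Delta>H h))))"
  using right_module unfolding right_module_hom_algebra_def hom_assoc_def by blast+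

text \<open>
  The simp rules below form the normalisation used throughout: \<iota> and \<kappa> are pushed inwards,
  products are re-associated to the right, and \<Delta>H and actions on compound arguments are expanded
  in Sweedler notation.
\<close>

lemma \<Delta>H_mult_sweedler [simp]:
  "\<Delta>H (\<mu>H (tensor a b)) = tensor_lift (\<lambda>x y. tensor_lift
     (\<lambda>x' y'. tensor (\<mu>H (tensor x x')) (\<mu>H (tensor y y'))) (\<Delta>H b)) (\<Delta>H a)"
  by (simp add: \<Delta>H_mult tensor_lift_normalize)

lemma \<Delta>H_\<alpha>H_sweedler [simp]:
  "\<Delta>H (\<alpha>H h) = tensor_lift (\<lambda>x y. tensor (\<alpha>H x) (\<alpha>H y)) (\<Delta>H h)"
  by (simp add: \<Delta>H_\<alpha>H tensor_lift_normalize)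

lemma \<Delta>H_\<iota>_sweedler [simp]: "\<Delta>H (\<iota> h) = tensor_lift (\<lambda>x y. tensor (\<iota> x) (\<iota> y)) (\<Delta>H h)"
proof -
  have "tensor_lift (\<lambda>x y. tensor (\<iota> x) (\<iota> y)) (\<Delta>H (\<alpha>H (\<iota> h)))
        = tensor_lift (\<lambda>x y. tensor (\<iota> x) (\<iota> y))
            (tensor_lift (\<lambda>x y. tensor (\<alpha>H x) (\<alpha>H y)) (\<Delta>H (\<iota> h)))"
    by (simp only: \<Delta>H_\<alpha>H_sweedler)
  also have "\<dots> = \<Delta>H (\<iota> h)"
    by (simp add: tensor_lift_normalize tensor_lift_tensor_eq)
  finally show ?thesis by simp
qed

lemma \<iota>_mult [simp]: "\<iota> (\<mu>H (tensor a b)) = \<mu>H (tensor (\<iota> a) (\<iota> b))"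
  by (metis \<alpha>H_mult \<alpha>H_\<iota> \<iota>_\<alpha>H)

lemma \<kappa>_mult [simp]: "\<kappa> (\<mu>C (tensor a b)) = \<mu>C (tensor (\<kappa> a) (\<kappa> b))"
  by (metis \<alpha>C_mult \<alpha>C_\<kappa> \<kappa>_\<alpha>C)

lemma \<kappa>_act [simp]: "\<kappa> (act (tensor a b)) = act (tensor (\<kappa> a) (\<iota> b))"
  by (metis \<alpha>C_act \<alpha>C_\<kappa> \<kappa>_\<alpha>C \<alpha>H_\<iota>)

lemma act_act_normalize [simp]:
  "act (tensor (act (tensor c h)) k) = act (tensor (\<alpha>C c) (\<mu>H (tensor h (\<iota> k))))"
  by (metis act_act \<alpha>H_\<iota>)

lemma act_mult_sweedler [simp]:
  "act (tensor (\<mu>C (tensor c c')) k)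
   = tensor_lift (\<lambda>x y. \<mu>C (tensor (act (tensor c x)) (act (tensor c' y)))) (\<Delta>H (\<iota> (\<iota> k)))"
proof -
  have "act (tensor (\<mu>C (tensor c c')) k)
        = \<mu>C (tmap act act (midswap (tensor (tensor c c') (\<Delta>H (\<iota> (\<iota> k))))))"
    using act_mult[of c c' "\<iota> (\<iota> k)"] by simp
  also have "\<dots> = tensor_lift (\<lambda>x y. \<mu>C (tensor (act (tensor c x)) (act (tensor c' y))))
                    (\<Delta>H (\<iota> (\<iota> k)))"
    by (simp only: tensor_lift_normalize structure_maps_simps) (simp add: tensor_lift_normalize)
  finally show ?thesis .
qed

lemma \<mu>H_reassoc [simp]:
  "\<mu>H (tensor (\<mu>H (tensor a b)) c) = \<mu>H (tensor (\<alpha>H a) (\<mu>H (tensor b (\<iota> c))))"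
  by (metis \<mu>H_hom_assoc \<alpha>H_\<iota>)

lemma \<mu>C_reassoc [simp]:
  "\<mu>C (tensor (\<mu>C (tensor a b)) c) = \<mu>C (tensor (\<alpha>C a) (\<mu>C (tensor b (\<kappa> c))))"
  by (metis \<mu>C_hom_assoc \<alpha>C_\<kappa>)

lemma \<Delta>H_hom_coassoc_sweedler:
  assumes "\<And>b c. klinear (\<lambda>a. \<Phi> a b c)" and "\<And>a c. klinear (\<lambda>b. \<Phi> a b c)"
    and "\<And>a b. klinear (\<lambda>c. \<Phi> a b c)"
  shows "tensor_lift (\<lambda>x y. tensor_lift (\<lambda>a b. \<Phi> a b (\<alpha>H y)) (\<Delta>H x)) (\<Delta>H h)
       = tensor_lift (\<lambda>x y. tensor_lift (\<lambda>b c. \<Phi> (\<alpha>H x) b c) (\<Delta>H y)) (\<Delta>H h)"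
proof -
  let ?\<Phi> = "tensor_lift (\<lambda>a bc. tensor_lift (\<lambda>b c. \<Phi> a b c) bc)"
  have inner: "tensor_lift (\<lambda>b c. \<Phi> a b c) (tensor b c) = \<Phi> a b c" for a b c
    by (rule tensor_lift_tensor) (use assms in auto)
  have outer: "?\<Phi> (tensor a bc) = tensor_lift (\<lambda>b c. \<Phi> a b c) bc" for a bc
    by (rule tensor_lift_tensor)
       (use assms in \<open>auto intro: klinear_tensor_lift_fun klinear_tensor_lift\<close>)
  have "?\<Phi> (tassoc (tmap \<Delta>H \<alpha>H (\<Delta>H h))) = ?\<Phi> (tmap \<alpha>H \<Delta>H (\<Delta>H h))"
    by (simp only: \<Delta>H_hom_coassoc)
  then show ?thesis
    by (simp only: tmap_eq_tensor_lift tassoc_tensor tassoc_simps tensor_lift_tensor_lift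
                   outer inner)
qed

lemma klinear_SM: "klinear SM"
  unfolding smash_mu_def by (rule klinear_lin_ext)

lemma klinear_SA: "klinear SA"
  unfolding smash_alpha_def tmap_def by (rule klinear_lin_ext)

lemma klinear_CO: "klinear CO"
  unfolding smash_coaction_def tmap_def by (rule klinear_comp[OF klinear_tassoc klinear_lin_ext])

lemmas SM_simps [simp] = klinear_simps[OF klinear_SM]

lemma smash_mu_tensor [simp]:
  "SM (tensor s t) = tensor_lift (\<lambda>h c. tensor_lift (\<lambda>h' c'. tensor_lift (\<lambda>x y.
      tensor (\<mu>H (tensor h (\<iota> x))) (\<mu>C (tensor (act (tensor (\<kappa> c) (\<iota> (\<iota> y)))) c')))
    (\<Delta>H h')) t) s"
proof (rule bilinear_eq_on_basis[where F = "\<lambda>s t. SM (tensor s t)"])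
  fix p q :: "'h \<times> 'c"
  show "SM (tensor (basisv p) (basisv q)) = tensor_lift (\<lambda>h c. tensor_lift (\<lambda>h' c'. tensor_lift
      (\<lambda>x y. tensor (\<mu>H (tensor h (\<iota> x))) (\<mu>C (tensor (act (tensor (\<kappa> c) (\<iota> (\<iota> y)))) c')))
      (\<Delta>H h')) (basisv q)) (basisv p)"
    by (simp add: tensor_basisv smash_mu_def smash_mu_elem_def tmap_eq_tensor_lift tensor_lift_basisv_pair case_prod_beta)
qed (auto simp: klinear_def)

lemma smash_alpha_sweedler [simp]: "SA t = tensor_lift (\<lambda>x y. tensor (\<alpha>H x) (\<alpha>C y)) t"
  unfolding smash_alpha_def tmap_eq_tensor_lift ..

lemma smash_coaction_sweedler [simp]:
  "CO t = tensor_lift (\<lambda>x y. tassoc (tensor (\<Delta>H x) (\<alpha>C y))) t"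
  unfolding smash_coaction_def tmap_eq_tensor_lift by simp

text \<open>Expanding m as \<open>tensor_lift tensor m\<close> exposes its elementary tensors to the normalisation.\<close>

lemma smash_alpha_mult: "SA (SM (tensor a b)) = SM (tensor (SA a) (SA b))"
  by (subst (1 2) tensor_lift_tensor_eq[symmetric, of a],
      subst (1 2) tensor_lift_tensor_eq[symmetric, of b])
     (simp add: tensor_lift_normalize)

lemma smash_coaction_\<alpha>: "tmap \<alpha>H SA (CO m) = CO (SA m)"
  by (subst (1 2) tensor_lift_tensor_eq[symmetric]) (simp add: tensor_lift_normalize)

lemma smash_mu_hom_assoc_tensor:
  "SM (tensor (SA (tensor h c)) (SM (tensor (tensor h' c') (tensor h'' c''))))
   = SM (tensor (SM (tensor (tensor h c) (tensor h' c'))) (SA (tensor h'' c'')))"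
proof -
  define \<Phi> where "\<Phi> = (\<lambda>a b z. tensor_lift (\<lambda>u v.
    tensor (\<mu>H (tensor (\<alpha>H h) (\<mu>H (tensor (\<iota> u) (\<iota> (\<iota> a))))))
      (\<mu>C (tensor (act (tensor c (\<mu>H (tensor (\<iota> (\<iota> v)) (\<iota> (\<iota> (\<iota> b)))))))
        (\<mu>C (tensor (act (tensor (\<kappa> c') (\<iota> (\<iota> (\<iota> z))))) c''))))) (\<Delta>H h'))"
  have "SM (tensor (SA (tensor h c)) (SM (tensor (tensor h' c') (tensor h'' c''))))
        = tensor_lift (\<lambda>x y. tensor_lift (\<lambda>a b. \<Phi> a b (\<alpha>H y)) (\<Delta>H x)) (\<Delta>H h'')"
    unfolding \<Phi>_def by (simp add: tensor_lift_normalize) (rule tensor_lift_cong, rule tensor_lift_swap)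
  also have "\<dots> = tensor_lift (\<lambda>x y. tensor_lift (\<lambda>b z. \<Phi> (\<alpha>H x) b z) (\<Delta>H y)) (\<Delta>H h'')"
    by (rule \<Delta>H_hom_coassoc_sweedler) (simp_all add: \<Phi>_def tensor_lift_normalize)
  also have "\<dots> = SM (tensor (SM (tensor (tensor h c) (tensor h' c'))) (SA (tensor h'' c'')))"
    unfolding \<Phi>_def
    by (simp add: tensor_lift_normalize)
       (rule trans[OF _ tensor_lift_swap[symmetric]], rule tensor_lift_cong, rule tensor_lift_swap)
  finally show ?thesis .
qed

lemma smash_coaction_mult_tensor:
  "CO (SM (tensor (tensor h c) (tensor h' c')))
   = tensor_mu \<mu>H SM (tensor (CO (tensor h c)) (CO (tensor h' c')))"
proof -
  define \<Phi> where "\<Phi> = (\<lambda>a b z. tensor_lift (\<lambda>h1 h2. tensor (\<mu>H (tensor h1 (\<iota> a)))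
    (tensor (\<mu>H (tensor h2 (\<iota> b))) (\<mu>C (tensor (act (tensor c (\<iota> (\<iota> z)))) (\<alpha>C c'))))) (\<Delta>H h))"
  have "CO (SM (tensor (tensor h c) (tensor h' c')))
        = tensor_lift (\<lambda>x y. tensor_lift (\<lambda>a b. \<Phi> a b (\<alpha>H y)) (\<Delta>H x)) (\<Delta>H h')"
    unfolding \<Phi>_def by (simp add: tensor_lift_normalize) (rule tensor_lift_cong, rule tensor_lift_swap)
  also have "\<dots> = tensor_lift (\<lambda>x y. tensor_lift (\<lambda>b z. \<Phi> (\<alpha>H x) b z) (\<Delta>H y)) (\<Delta>H h')"
    by (rule \<Delta>H_hom_coassoc_sweedler) (simp_all add: \<Phi>_def tensor_lift_normalize)
  also have "\<dots> = tensor_mu \<mu>H SM (tensor (CO (tensor h c)) (CO (tensor h' c')))"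
    unfolding \<Phi>_def
    by (simp add: tensor_lift_normalize tensor_mu_def)
       (rule sym, rule tensor_lift_cong, rule tensor_lift_swap)
  finally show ?thesis .
qed

lemma smash_coaction_coassoc_tensor:
  "tassoc (tmap \<Delta>H SA (CO (tensor h c))) = tmap \<alpha>H CO (CO (tensor h c))"
  using \<Delta>H_hom_coassoc_sweedler[of "\<lambda>a b z. tensor a (tensor b (tensor z (\<alpha>C (\<alpha>C c))))" h]
  by (simp add: tensor_lift_normalize)

lemma smash_coaction_coassoc: "tassoc (tmap \<Delta>H SA (CO m)) = tmap \<alpha>H CO (CO m)"
  by (rule klinear_eq_on_tensors[where f = "\<lambda>m. tassoc (tmap \<Delta>H SA (CO m))",
        OF smash_coaction_coassoc_tensor])
     (simp_all add: tensor_lift_normalize)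

lemma smash_mu_hom_assoc: "SM (tensor (SA a) (SM (tensor b d))) = SM (tensor (SM (tensor a b)) (SA d))"
  by (rule trilinear_eq_on_tensors[where F = "\<lambda>a b d. SM (tensor (SA a) (SM (tensor b d)))",
        OF smash_mu_hom_assoc_tensor])
     (simp_all add: tensor_lift_normalize)

lemma smash_coaction_mult: "CO (SM (tensor a b)) = tensor_mu \<mu>H SM (tensor (CO a) (CO b))"
  by (rule bilinear_eq_on_tensors[where F = "\<lambda>a b. CO (SM (tensor a b))",
        OF smash_coaction_mult_tensor])
     (simp_all add: tensor_lift_normalize tensor_mu_def)

end

theorem proposition3p15:
  fixes \<mu>H :: "('h \<times> 'h, 'k::field) vec \<Rightarrow> ('h, 'k) vec"
    and \<Delta>H :: "('h, 'k) vec \<Rightarrow> ('h \<times> 'h, 'k) vec"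
    and \<alpha>H :: "('h, 'k) vec \<Rightarrow> ('h, 'k) vec"
    and \<mu>C :: "('c \<times> 'c, 'k) vec \<Rightarrow> ('c, 'k) vec"
    and \<alpha>C :: "('c, 'k) vec \<Rightarrow> ('c, 'k) vec"
    and act :: "('c \<times> 'h, 'k) vec \<Rightarrow> ('c, 'k) vec"
  assumes "hom_bialgebra \<mu>H \<Delta>H \<alpha>H"
    and "right_module_hom_algebra \<mu>H \<Delta>H \<alpha>H \<mu>C \<alpha>C act"
    and "bij \<alpha>H" and "bij \<alpha>C"
  shows "left_comodule_hom_algebra \<mu>H \<Delta>H \<alpha>H
           (smash_mu \<mu>H \<Delta>H \<alpha>H \<mu>C \<alpha>C act) (smash_alpha \<alpha>H \<alpha>C)
           (smash_coaction \<Delta>H \<alpha>C)"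
proof -
  interpret hom_smash_product \<mu>H \<Delta>H \<alpha>H \<mu>C \<alpha>C act
    using assms by unfold_locales
  show ?thesis
    unfolding left_comodule_hom_algebra_def hom_assoc_def left_comodule_def hom_assoc_morphism_def
    using klinear_SM klinear_SA klinear_CO smash_alpha_mult smash_mu_hom_assoc
      smash_coaction_\<alpha> smash_coaction_coassoc smash_coaction_mult
    by metis
qed

end
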